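(* For every $n\ge1$, letting $k_n=\lceil\log_2 n\rceil$, $$c_n=\sum_{j=1}^{k_n-1}2^j\, s(2^{-j}n),$$ where $s(x)=\min_{z\in\mathbb{Z}}|x-z|$ is the distance from $x\in\mathbb{R}$ to the nearest integer.
   Context: Bifurcating trees: rooted trees in which every internal node has exactly two children; $\mathcal{T}_n$ is the set of isomorphism classes of bifurcating trees with $n$ leaves. For a node $w$, $\kappa_T(w)$ is its number of descendant leaves. The Colless index is $\mathcal{C}(T)=\sum_{v}|\kappa_T(v_1)-\kappa_T(v_2)|$, summed over internal nodes $v$ with children $v_1,v_2$; $c_n=\min\{\mathcal{C}(T):T\in\mathcal{T}_n\}$. *)

theory Defs
  imports "HOL-Analysis.Analysis"
begin

text \<open>The datatype is ordered;
  all notions below are invariant under swapping children, so minimising over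
  this datatype equals minimising over isomorphism classes.\<close>
datatype btree = Leaf | Node btree btree

fun leaves :: "btree \<Rightarrow> nat" where
  "leaves Leaf = 1"
| "leaves (Node l r) = leaves l + leaves r"

fun colless :: "btree \<Rightarrow> nat" where
  "colless Leaf = 0"
| "colless (Node l r) =
     nat \<bar>int (leaves l) - int (leaves r)\<bar> + colless l + colless r"

definition min_colless :: "nat \<Rightarrow> nat" where
  "min_colless n = Min {colless t | t. leaves t = n}"

definition dist_nearest_int :: "real \<Rightarrow> real" where
  "dist_nearest_int x = (INF z::int. \<bar>x - real_of_int z\<bar>)"

end

theory Submission
  imports Defs "HOL-Library.Log_Nat"
begin

text \<open>Write \<open>S n = (\<Sum>j<\<lceil>log\<^sub>2 n\<rceil>. d\<^sub>j n)\<close>, where \<open>d\<^sub>j n\<close> is the distance from \<open>n\<close>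
  to the nearest multiple of \<open>2 ^ j\<close>; then \<open>2 ^ j * s (n / 2 ^ j) = d\<^sub>j n\<close>, and the
  \<open>j = 0\<close> term vanishes. Doubling \<open>n\<close> doubles every \<open>d\<^sub>j\<close>, and for odd \<open>n = 2m + 1\<close>
  the distance \<open>d\<^sub>j\<^sub>+\<^sub>1 n\<close> splits as \<open>d\<^sub>j m + d\<^sub>j (m + 1)\<close>, so
  \<open>S (2m) = 2 S m\<close> and \<open>S (2m + 1) = S m + S (m + 1) + 1\<close>. This is exactly the
  recursion for the Colless index of the maximally balanced tree, which splits \<open>n\<close> leaves
  into \<open>\<lceil>n/2\<rceil>\<close> and \<open>\<lfloor>n/2\<rfloor>\<close>. Conversely, the recursion gives
  \<open>S (a + b) \<le> S a + S b + \<bar>a - b\<bar>\<close> by induction on \<open>a + b\<close> along the parities of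
  \<open>a\<close> and \<open>b\<close>, and hence \<open>S\<close> of the number of leaves is a lower bound for the Colless
  index of every tree.\<close>

definition dist_to_mult :: "nat \<Rightarrow> nat \<Rightarrow> nat" where
  "dist_to_mult M n = min (n mod M) (M - n mod M)"

lemma dist_to_mult_1 [simp]: "dist_to_mult 1 n = 0" "dist_to_mult (Suc 0) n = 0"
  by (simp_all add: dist_to_mult_def)

lemma dist_to_mult_self [simp]: "dist_to_mult M M = 0"
  by (simp add: dist_to_mult_def)

lemma dist_to_mult_double: "dist_to_mult (2 * M) (2 * m) = 2 * dist_to_mult M m"
  by (simp add: dist_to_mult_def mod_mult_mult1 min_def) arith

lemma dist_to_mult_odd:
  assumes "even M" "M > 0"
  shows "dist_to_mult (2 * M) (2 * m + 1) = dist_to_mult M m + dist_to_mult M (m + 1)"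
proof -
  define r where "r = m mod M"
  have "r < M"
    using \<open>M > 0\<close> by (simp add: r_def)
  have "Suc (2 * r) \<noteq> 2 * M"
    by presburger
  then have odd: "dist_to_mult (2 * M) (2 * m + 1) = min (2 * r + 1) (2 * M - (2 * r + 1))"
    by (simp add: dist_to_mult_def r_def mod_mult_mult1 mod_Suc)
  have succ: "dist_to_mult M (m + 1) = (if r + 1 = M then 0 else min (r + 1) (M - (r + 1)))"
    by (simp add: dist_to_mult_def r_def mod_Suc)
  have "dist_to_mult M m = min r (M - r)"
    by (simp add: dist_to_mult_def r_def)
  moreover have "min (2 * r + 1) (2 * M - (2 * r + 1)) =
      min r (M - r) + (if r + 1 = M then 0 else min (r + 1) (M - (r + 1)))"
  proof (cases "2 * r + 2 \<le> M")
    case True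
    then show ?thesis by (simp add: min_def)
  next
    case False
    then have "M \<le> 2 * r"
      using \<open>even M\<close> by presburger
    then have "min (2 * r + 1) (2 * M - (2 * r + 1)) = 2 * M - (2 * r + 1)"
      and "min r (M - r) = M - r" and "min (r + 1) (M - (r + 1)) = M - (r + 1)"
      by simp_all
    then show ?thesis
      using \<open>r < M\<close> by auto
  qed
  ultimately show ?thesis
    unfolding odd succ by (simp only:)
qed

lemma dist_to_mult_odd_pow2:
  "dist_to_mult (2 * 2 ^ j) (2 * m + 1) =
     dist_to_mult (2 ^ j) m + dist_to_mult (2 ^ j) (m + 1) + (if j = 0 then 1 else 0)"
proof (cases j)
  case 0
  then show ?thesis by (simp add: dist_to_mult_def)
next
  case (Suc i)
  then show ?thesis
    using dist_to_mult_odd[of "2 ^ j" m] by simp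
qed

definition dyadic_dist_sum :: "nat \<Rightarrow> nat" where
  "dyadic_dist_sum n = (\<Sum>j<ceillog2 n. dist_to_mult (2 ^ j) n)"

lemma dyadic_dist_sum_0 [simp]: "dyadic_dist_sum 0 = 0"
  and dyadic_dist_sum_1 [simp]: "dyadic_dist_sum 1 = 0" "dyadic_dist_sum (Suc 0) = 0"
  by (simp_all add: dyadic_dist_sum_def)

lemma dyadic_dist_sum_double: "dyadic_dist_sum (2 * m) = 2 * dyadic_dist_sum m"
proof (cases "m = 0")
  case False
  then have "dyadic_dist_sum (2 * m) = (\<Sum>j<Suc (ceillog2 m). dist_to_mult (2 ^ j) (2 * m))"
    by (simp add: dyadic_dist_sum_def ceillog2_rec_even)
  also have "\<dots> = (\<Sum>j<ceillog2 m. dist_to_mult (2 * 2 ^ j) (2 * m))"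
    by (subst sum.lessThan_Suc_shift) simp
  also have "\<dots> = 2 * dyadic_dist_sum m"
    by (simp add: dyadic_dist_sum_def dist_to_mult_double sum_distrib_left)
  finally show ?thesis .
qed simp

text \<open>The two bounds differ only for \<open>m = 2 ^ k\<close>, where the extra term is
  \<open>dist_to_mult (2 ^ k) (2 ^ k) = 0\<close>.\<close>
lemma dyadic_dist_sum_ceillog2_Suc:
  assumes "m > 0"
  shows "(\<Sum>j<ceillog2 (m + 1). dist_to_mult (2 ^ j) m) = dyadic_dist_sum m"
proof (cases "m = 2 ^ ceillog2 m")
  case True
  then have "ceillog2 (m + 1) = Suc (ceillog2 m)"
    by (intro ceillog2_eqI) (use assms in auto)
  then show ?thesis
    using True by (simp add: dyadic_dist_sum_def)
next
  case False
  then have "ceillog2 (m + 1) = ceillog2 m"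
    using le_two_power_ceillog2[of m] two_power_ceillog2_gt[of m] assms
    by (intro ceillog2_eqI) auto
  then show ?thesis
    by (simp add: dyadic_dist_sum_def)
qed

lemma dyadic_dist_sum_odd:
  "dyadic_dist_sum (2 * m + 1) = dyadic_dist_sum m + dyadic_dist_sum (m + 1) + (if m = 0 then 0 else 1)"
proof (cases "m = 0")
  case False
  then have "m > 0"
    by simp
  define K where "K = ceillog2 (m + 1)"
  have "K > 0"
    using ceillog2_ge_iff[of "m + 1" 1] False by (simp add: K_def)
  have "dyadic_dist_sum (2 * m + 1) = (\<Sum>j<Suc K. dist_to_mult (2 ^ j) (2 * m + 1))"
    using False by (simp add: dyadic_dist_sum_def K_def ceillog2_rec_odd)
  also have "\<dots> = (\<Sum>j<K. dist_to_mult (2 * 2 ^ j) (2 * m + 1))"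
    by (subst sum.lessThan_Suc_shift) simp
  also have "\<dots> = (\<Sum>j<K. dist_to_mult (2 ^ j) m + dist_to_mult (2 ^ j) (m + 1) +
      (if j = 0 then 1 else 0))"
    by (simp only: dist_to_mult_odd_pow2)
  also have "\<dots> = (\<Sum>j<K. dist_to_mult (2 ^ j) m) + (\<Sum>j<K. dist_to_mult (2 ^ j) (m + 1)) + 1"
    using \<open>K > 0\<close> by (simp add: sum.distrib)
  also have "\<dots> = dyadic_dist_sum m + dyadic_dist_sum (m + 1) + 1"
    using False unfolding K_def dyadic_dist_sum_ceillog2_Suc[OF \<open>m > 0\<close>]
    by (simp add: dyadic_dist_sum_def[of "Suc m"])
  finally show ?thesis
    using False by simp
qed simp

lemma dyadic_dist_sum_add_le_even_even:
  assumes "int (dyadic_dist_sum (p + q)) \<le>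
      int (dyadic_dist_sum p) + int (dyadic_dist_sum q) + \<bar>int p - int q\<bar>"
  shows "int (dyadic_dist_sum (2 * p + 2 * q)) \<le>
      int (dyadic_dist_sum (2 * p)) + int (dyadic_dist_sum (2 * q)) + \<bar>int (2 * p) - int (2 * q)\<bar>"
proof -
  have "dyadic_dist_sum (2 * p + 2 * q) = 2 * dyadic_dist_sum (p + q)"
    using dyadic_dist_sum_double[of "p + q"] by (simp add: distrib_left)
  moreover have "\<bar>int (2 * p) - int (2 * q)\<bar> = 2 * \<bar>int p - int q\<bar>"
    by (simp add: abs_if)
  ultimately show ?thesis
    using assms by (simp add: dyadic_dist_sum_double)
qed

lemma dyadic_dist_sum_add_le_even_odd:
  assumes "p > 0"
    and IH: "int (dyadic_dist_sum (p + q)) \<le>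
      int (dyadic_dist_sum p) + int (dyadic_dist_sum q) + \<bar>int p - int q\<bar>"
    and IH_Suc: "int (dyadic_dist_sum (p + (q + 1))) \<le>
      int (dyadic_dist_sum p) + int (dyadic_dist_sum (q + 1)) + \<bar>int p - int (q + 1)\<bar>"
  shows "int (dyadic_dist_sum (2 * p + (2 * q + 1))) \<le>
      int (dyadic_dist_sum (2 * p)) + int (dyadic_dist_sum (2 * q + 1)) +
      \<bar>int (2 * p) - int (2 * q + 1)\<bar>"
proof -
  have "dyadic_dist_sum (2 * p + (2 * q + 1)) = dyadic_dist_sum (p + q) + dyadic_dist_sum (p + (q + 1)) + 1"
    using dyadic_dist_sum_odd[of "p + q"] \<open>p > 0\<close> by (simp add: algebra_simps)
  moreover have "dyadic_dist_sum (2 * p) = 2 * dyadic_dist_sum p"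
    by (rule dyadic_dist_sum_double)
  moreover have "dyadic_dist_sum (2 * q + 1) =
      dyadic_dist_sum q + dyadic_dist_sum (q + 1) + (if q = 0 then 0 else 1)"
    by (rule dyadic_dist_sum_odd)
  moreover have "\<bar>int (2 * p) - int (2 * q + 1)\<bar> = \<bar>int p - int q\<bar> + \<bar>int p - int (q + 1)\<bar>"
    by (simp add: abs_if)
  ultimately show ?thesis
    using IH IH_Suc \<open>p > 0\<close> by (cases "q = 0") simp_all
qed

lemma dyadic_dist_sum_add_le_odd_odd:
  assumes "p + q > 0"
    and IH_left: "int (dyadic_dist_sum ((p + 1) + q)) \<le>
      int (dyadic_dist_sum (p + 1)) + int (dyadic_dist_sum q) + \<bar>int (p + 1) - int q\<bar>"
    and IH_right: "int (dyadic_dist_sum (p + (q + 1))) \<le>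
      int (dyadic_dist_sum p) + int (dyadic_dist_sum (q + 1)) + \<bar>int p - int (q + 1)\<bar>"
  shows "int (dyadic_dist_sum ((2 * p + 1) + (2 * q + 1))) \<le>
      int (dyadic_dist_sum (2 * p + 1)) + int (dyadic_dist_sum (2 * q + 1)) +
      \<bar>int (2 * p + 1) - int (2 * q + 1)\<bar>"
proof -
  have "dyadic_dist_sum ((2 * p + 1) + (2 * q + 1)) =
      dyadic_dist_sum ((p + 1) + q) + dyadic_dist_sum (p + (q + 1))"
    using dyadic_dist_sum_double[of "p + q + 1"] by (simp add: algebra_simps)
  moreover have "dyadic_dist_sum (2 * p + 1) =
      dyadic_dist_sum p + dyadic_dist_sum (p + 1) + (if p = 0 then 0 else 1)"
    and "dyadic_dist_sum (2 * q + 1) =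
      dyadic_dist_sum q + dyadic_dist_sum (q + 1) + (if q = 0 then 0 else 1)"
    by (rule dyadic_dist_sum_odd)+
  moreover have "\<bar>int (p + 1) - int q\<bar> + \<bar>int p - int (q + 1)\<bar> \<le>
      2 * \<bar>int p - int q\<bar> + int (if p = 0 then 0 else 1) + int (if q = 0 then 0 else 1)"
    using \<open>p + q > 0\<close> by (auto simp: abs_if)
  moreover have "\<bar>int (2 * p + 1) - int (2 * q + 1)\<bar> = 2 * \<bar>int p - int q\<bar>"
    by (simp add: abs_if)
  ultimately show ?thesis
    using IH_left IH_right by linarith
qed

lemma dyadic_dist_sum_add_le:
  "int (dyadic_dist_sum (a + b)) \<le>
     int (dyadic_dist_sum a) + int (dyadic_dist_sum b) + \<bar>int a - int b\<bar>"
proof (induction "a + b" arbitrary: a b rule: less_induct)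
  case less
  show ?case
  proof (cases "a = 0 \<or> b = 0")
    case True
    then show ?thesis by auto
  next
    case False
    consider (even_even) p q where "a = 2 * p" "b = 2 * q"
      | (even_odd) p q where "a = 2 * p" "b = 2 * q + 1"
      | (odd_even) p q where "a = 2 * p + 1" "b = 2 * q"
      | (odd_odd) p q where "a = 2 * p + 1" "b = 2 * q + 1"
      by (metis evenE oddE)
    then show ?thesis
    proof cases
      case even_even
      then show ?thesis
        using less(1)[of p q] dyadic_dist_sum_add_le_even_even[of p q] False by simp
    next
      case even_odd
      then show ?thesis
        using less(1)[of p q] less(1)[of p "q + 1"] dyadic_dist_sum_add_le_even_odd[of p q] False
        by simp
    next
      case odd_even
      then show ?thesis
        using less(1)[of q p] less(1)[of q "p + 1"] dyadic_dist_sum_add_le_even_odd[of q p] False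
        by (simp add: add.commute abs_minus_commute)
    next
      case odd_odd
      show ?thesis
      proof (cases "p + q = 0")
        case True
        then have "a = 1" "b = 1"
          using odd_odd by simp_all
        then show ?thesis
          using dyadic_dist_sum_double[of 1] by (simp add: numeral_2_eq_2)
      next
        case False
        then show ?thesis
          using odd_odd less(1)[of "p + 1" q] less(1)[of p "q + 1"]
            dyadic_dist_sum_add_le_odd_odd[of p q]
          by simp
      qed
    qed
  qed
qed

lemma leaves_pos: "leaves t > 0"
  by (induction t) auto

lemma colless_le_leaves_squared: "colless t \<le> leaves t ^ 2"
proof (induction t)
  case (Node l r)
  have "nat \<bar>int (leaves l) - int (leaves r)\<bar> \<le> leaves l + leaves r"
    by simp
  also have "\<dots> \<le> leaves l * leaves r + leaves l * leaves r"
    using leaves_pos[of l] leaves_pos[of r] by (intro add_mono) simp_all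
  finally show ?case
    using Node by (simp add: power2_eq_square algebra_simps)
qed simp

lemma dyadic_dist_sum_leaves_le_colless: "dyadic_dist_sum (leaves t) \<le> colless t"
proof (induction t)
  case (Node l r)
  then show ?case
    using dyadic_dist_sum_add_le[of "leaves l" "leaves r"] by simp
qed simp

function balanced_tree :: "nat \<Rightarrow> btree" where
  "balanced_tree n =
     (if n \<le> 1 then Leaf else Node (balanced_tree ((n + 1) div 2)) (balanced_tree (n div 2)))"
  by pat_completeness auto
termination
  by (relation "Wellfounded.measure id") auto

declare balanced_tree.simps [simp del]

lemma leaves_colless_balanced_tree:
  assumes "n > 0"
  shows "leaves (balanced_tree n) = n \<and> colless (balanced_tree n) = dyadic_dist_sum n"
  using assms
proof (induction n rule: less_induct)
  case (less n)
  show ?case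
  proof (cases "n = 1")
    case True
    then show ?thesis by (simp add: balanced_tree.simps)
  next
    case False
    then have split: "balanced_tree n = Node (balanced_tree ((n + 1) div 2)) (balanced_tree (n div 2))"
      and IH: "leaves (balanced_tree ((n + 1) div 2)) = (n + 1) div 2"
        "colless (balanced_tree ((n + 1) div 2)) = dyadic_dist_sum ((n + 1) div 2)"
        "leaves (balanced_tree (n div 2)) = n div 2"
        "colless (balanced_tree (n div 2)) = dyadic_dist_sum (n div 2)"
      using less by (simp_all add: balanced_tree.simps[of n])
    show ?thesis
    proof (cases "even n")
      case True
      then obtain m where "n = 2 * m" ..
      then show ?thesis
        using split IH by (simp add: dyadic_dist_sum_double)
    next
      case False
      then obtain m where "n = 2 * m + 1" ..
      then show ?thesis
        using split IH \<open>n \<noteq> 1\<close> dyadic_dist_sum_odd[of m] by simp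
    qed
  qed
qed

lemma min_colless_eq_dyadic_dist_sum:
  assumes "n > 0"
  shows "min_colless n = dyadic_dist_sum n"
  unfolding min_colless_def
proof (rule Min_eqI)
  show "finite {colless t | t. leaves t = n}"
    by (rule finite_subset[of _ "{..n ^ 2}"]) (auto simp: colless_le_leaves_squared)
  show "dyadic_dist_sum n \<in> {colless t | t. leaves t = n}"
    using leaves_colless_balanced_tree[OF assms] by (metis (mono_tags, lifting) mem_Collect_eq)
qed (use dyadic_dist_sum_leaves_le_colless in auto)

lemma dist_nearest_int_eq_min: "dist_nearest_int x = min (frac x) (1 - frac x)"
  unfolding dist_nearest_int_def
proof (rule cInf_eq_minimum)
  show "min (frac x) (1 - frac x) \<in> range (\<lambda>z::int. \<bar>x - of_int z\<bar>)"
  proof (cases "frac x \<le> 1 - frac x")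
    case True
    then have "min (frac x) (1 - frac x) = \<bar>x - of_int \<lfloor>x\<rfloor>\<bar>"
      by (simp add: frac_def)
    then show ?thesis by blast
  next
    case False
    then have "min (frac x) (1 - frac x) = \<bar>x - of_int (\<lfloor>x\<rfloor> + 1)\<bar>"
      by (simp add: frac_def)
    then show ?thesis by blast
  qed
next
  fix y
  assume "y \<in> range (\<lambda>z::int. \<bar>x - of_int z\<bar>)"
  then obtain z :: int where "y = \<bar>x - of_int z\<bar>"
    by blast
  moreover have "z \<le> \<lfloor>x\<rfloor> \<or> \<lfloor>x\<rfloor> + 1 \<le> z"
    by linarith
  ultimately show "min (frac x) (1 - frac x) \<le> y"
    unfolding frac_def by linarith
qed

lemma dist_to_mult_eq_dist_nearest_int:
  assumes "M > 0"
  shows "real (dist_to_mult M n) = real M * dist_nearest_int (real n / real M)"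
proof -
  have "real n = real M * real (n div M) + real (n mod M)"
    by (metis div_mult_mod_eq of_nat_add of_nat_mult mult.commute)
  then have "real n / real M - real (n div M) = real (n mod M) / real M"
    using assms by (simp add: field_simps)
  then have frac: "real M * frac (real n / real M) = real (n mod M)"
    using assms by (simp add: frac_def floor_divide_of_nat_eq)
  have "real M * dist_nearest_int (real n / real M) =
      min (real M * frac (real n / real M)) (real M - real M * frac (real n / real M))"
    by (simp add: dist_nearest_int_eq_min min_mult_distrib_left right_diff_distrib)
  also have "\<dots> = real (dist_to_mult M n)"
    using assms by (simp add: frac dist_to_mult_def of_nat_diff of_nat_min)
  finally show ?thesis ..
qed

theorem theorem3:
  fixes n :: nat
  assumes "n \<ge> 1"
  shows "real (min_colless n) =
    (\<Sum>j = 1..nat \<lceil>log 2 (real n)\<rceil> - 1.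
        2 ^ j * dist_nearest_int (real n / 2 ^ j))"
proof -
  define s where "s j = 2 ^ j * dist_nearest_int (real n / 2 ^ j)" for j :: nat
  have "s 0 = 0"
    using dist_to_mult_eq_dist_nearest_int[of 1 n] by (simp add: s_def)
  have "real (min_colless n) = (\<Sum>j<ceillog2 n. real (dist_to_mult (2 ^ j) n))"
    using assms by (simp add: min_colless_eq_dyadic_dist_sum dyadic_dist_sum_def)
  also have "\<dots> = (\<Sum>j<ceillog2 n. s j)"
    by (simp add: s_def dist_to_mult_eq_dist_nearest_int)
  also have "\<dots> = (\<Sum>j = 1..ceillog2 n - 1. s j)"
  proof (cases "ceillog2 n")
    case Suc
    then show ?thesis
      using \<open>s 0 = 0\<close>
      by (simp add: sum.lessThan_Suc_shift sum.atLeast1_atMost_eq del: sum.lessThan_Suc)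
  qed simp
  also have "ceillog2 n = nat \<lceil>log 2 (real n)\<rceil>"
    using assms by (simp add: ceillog2_def)
  finally show ?thesis
    by (simp add: s_def)
qed

end
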